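(* Let $J\ge 2$ and, for every dimension $d$, let $F_1,\ldots,F_J$ be distributions on $\mathbb{R}^d$ satisfying assumptions (A1$^\circ$)–(A3$^\circ$) in the context. For each $j$ let $\mathbf{X}_{j1},\ldots,\mathbf{X}_{jn_j}$ be a training sample from $F_j$ with fixed $n_j\ge 2$, all training observations mutually independent and independent of the test observation. If $\mathcal{E}_{ji}>0$ for all $j\neq i$, then the misclassification rate of the MDist1 classifier converges to $0$ as $d\to\infty$.
   Context: $\|\mathbf{v}\|_1=\sum_q|v_q|$; "measurement variables" are coordinates. Assumptions: (A1$^\circ$) In each class, the coordinates have second moments bounded uniformly over coordinates and $d$. (A2$^\circ$) If $\mathbf{X}=(X_1,\ldots,X_d)^\top\sim F_j$ and $\mathbf{Y}=(Y_1,\ldots,Y_d)^\top\sim F_i$ ($1\le j,i\le J$) are independent and $\mathbf{U}=\mathbf{X}-\mathbf{Y}$, then $\sum_{r\neq s}|\mathrm{Corr}(|U_r|,|U_s|)|=o(d^2)$. (A3$^\circ$) For independent $\mathbf{X}\sim F_j$, $\mathbf{Y}\sim F_i$ ($1\le j,i\le J$), $\frac1d E\|\mathbf{X}-\mathbf{Y}\|_1=\frac1d\sum_{q=1}^dE|X_q-Y_q|$ converges to a constant $\tau_{ji}$ as $d\to\infty$. For $j\ne i$ and independent $\mathbf{X},\mathbf{X}'\sim F_j$, $\mathbf{Y},\mathbf{Y}'\sim F_i$, let $e_{ji}^{(q)}=2E|X_q-Y_q|-E|X_q-X_q'|-E|Y_q-Y_q'|$, $\bar e_{ji}(d)=\frac1d\sum_{q=1}^d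 e_{ji}^{(q)}$, and $\mathcal{E}_{ji}=\lim_{d\to\infty}\bar e_{ji}(d)$. MDist1 classifier: for a point $\mathbf{z}$, its feature vector is $(d^*_1(\mathbf{z}),\ldots,d^*_J(\mathbf{z}))$ with $d^*_j(\mathbf{z})=\min_{1\le\ell\le n_j}\|\mathbf{z}-\mathbf{X}_{j\ell}\|_1$; for a training point $\mathbf{X}_{ji}$ the features are computed leave-one-out (the minimum over its own class excludes $\ell=i$). A test observation is assigned to the class of the training observation whose feature vector is nearest (Euclidean distance) to its own feature vector. Misclassification rate converging to $0$ means that for each $j$, the probability that $\mathbf{Z}\sim F_j$ is not assigned to class $j$ tends to $0$. *)

theory Defs
  imports "HOL-Probability.Probability"
begin

text \<open>Points of R^d are functions nat => real; coordinate q ranges over {..<d}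
  (i.e. 0-based coordinates 0..d-1 instead of 1..d).\<close>

definition l1dist :: "nat \<Rightarrow> (nat \<Rightarrow> real) \<Rightarrow> (nat \<Rightarrow> real) \<Rightarrow> real" where
  "l1dist d u v = (\<Sum>q<d. \<bar>u q - v q\<bar>)"

definition covariance :: "'a measure \<Rightarrow> ('a \<Rightarrow> real) \<Rightarrow> ('a \<Rightarrow> real) \<Rightarrow> real" where
  "covariance M f g =
     (\<integral>w. (f w - (\<integral>w'. f w' \<partial>M)) * (g w - (\<integral>w'. g w' \<partial>M)) \<partial>M)"

definition correlation :: "'a measure \<Rightarrow> ('a \<Rightarrow> real) \<Rightarrow> ('a \<Rightarrow> real) \<Rightarrow> real" where
  "correlation M f g =
     covariance M f g / (sqrt (covariance M f f) * sqrt (covariance M g g))"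

definition mad :: "(nat \<Rightarrow> real) measure \<Rightarrow> (nat \<Rightarrow> real) measure \<Rightarrow> nat \<Rightarrow> real" where
  "mad P Q q = (\<integral>xy. \<bar>fst xy q - snd xy q\<bar> \<partial>(P \<Otimes>\<^sub>M Q))"

definition energy_avg :: "nat \<Rightarrow> (nat \<Rightarrow> real) measure \<Rightarrow> (nat \<Rightarrow> real) measure \<Rightarrow> real" where
  "energy_avg d P Q = (\<Sum>q<d. 2 * mad P Q q - mad P P q - mad Q Q q) / real d"

text \<open>Training sample: x (k,l), class k in {1..J}, l in {1..n k}.\<close>
definition test_features ::
  "nat \<Rightarrow> (nat \<Rightarrow> nat) \<Rightarrow> (nat \<times> nat \<Rightarrow> nat \<Rightarrow> real) \<Rightarrow> (nat \<Rightarrow> real) \<Rightarrow> nat \<Rightarrow> real" where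
  "test_features d n x z = (\<lambda>k. Min ((\<lambda>l. l1dist d z (x (k,l))) ` {1..n k}))"

definition train_features ::
  "nat \<Rightarrow> (nat \<Rightarrow> nat) \<Rightarrow> (nat \<times> nat \<Rightarrow> nat \<Rightarrow> real) \<Rightarrow> nat \<times> nat \<Rightarrow> nat \<Rightarrow> real" where
  "train_features d n x ji = (\<lambda>k. Min ((\<lambda>l. l1dist d (x ji) (x (k,l))) `
       {l \<in> {1..n k}. (k,l) \<noteq> ji}))"

definition feat_dist :: "nat \<Rightarrow> (nat \<Rightarrow> real) \<Rightarrow> (nat \<Rightarrow> real) \<Rightarrow> real" where
  "feat_dist J a b = sqrt (\<Sum>k\<in>{1..J}. (a k - b k)^2)"

text \<open>The test point z (true class j0) is (possibly, under some tie-breaking) not assigned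
  to class j0: some training point of another class has a feature vector at least as
  close as every training point of class j0.\<close>
definition mdist1_misclassified ::
  "nat \<Rightarrow> nat \<Rightarrow> (nat \<Rightarrow> nat) \<Rightarrow> (nat \<times> nat \<Rightarrow> nat \<Rightarrow> real) \<Rightarrow> (nat \<Rightarrow> real) \<Rightarrow> nat \<Rightarrow> bool" where
  "mdist1_misclassified d J n x z j0 \<longleftrightarrow>
     (\<exists>i\<in>{1..J}. \<exists>l\<in>{1..n i}. i \<noteq> j0 \<and>
        (\<forall>l'\<in>{1..n j0}.
           feat_dist J (test_features d n x z) (train_features d n x (i,l))
           \<le> feat_dist J (test_features d n x z) (train_features d n x (j0,l'))))"

definition sample_space ::
  "nat \<Rightarrow> nat \<Rightarrow> (nat \<Rightarrow> nat) \<Rightarrow> (nat \<Rightarrow> nat \<Rightarrow> (nat \<Rightarrow> real) measure) \<Rightarrow> nat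
    \<Rightarrow> ((nat \<times> nat \<Rightarrow> nat \<Rightarrow> real) \<times> (nat \<Rightarrow> real)) measure" where
  "sample_space d J n F j0 =
     (PiM (SIGMA k:{1..J}. {1..n k}) (\<lambda>(k,l). F d k)) \<Otimes>\<^sub>M F d j0"

definition misclass_event ::
  "nat \<Rightarrow> nat \<Rightarrow> (nat \<Rightarrow> nat) \<Rightarrow> (nat \<Rightarrow> nat \<Rightarrow> (nat \<Rightarrow> real) measure) \<Rightarrow> nat
    \<Rightarrow> ((nat \<times> nat \<Rightarrow> nat \<Rightarrow> real) \<times> (nat \<Rightarrow> real)) set" where
  "misclass_event d J n F j0 =
     {xz \<in> space (sample_space d J n F j0). mdist1_misclassified d J n (fst xz) (snd xz) j0}"

end

theory Submission
  imports Defs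
begin

text \<open>For independent \<open>X \<sim> F\<^sub>j\<close> and \<open>Y \<sim> F\<^sub>i\<close>, Chebyshev's inequality together with
  (A1) and (A2) shows that \<open>\<parallel>X - Y\<parallel>\<^sub>1 / d\<close> concentrates around \<open>\<tau>\<^sub>j\<^sub>i\<close>. Hence, with
  probability tending to 1, each of the finitely many pairwise distances between the test point
  and the training points is within \<open>d \<epsilon>\<close> of \<open>d \<tau>\<close>. On that event the feature vector of a
  test point from class \<open>j\<^sub>0\<close> is within \<open>2 J d \<epsilon>\<close> of those of the training points of class
  \<open>j\<^sub>0\<close>, whereas in the coordinates \<open>i\<close> and \<open>j\<^sub>0\<close> alone it differs from that of a training
  point of class \<open>i\<close> by about \<open>d (2\<tau>\<^sub>j\<^sub>0\<^sub>i - \<tau>\<^sub>j\<^sub>0\<^sub>j\<^sub>0 - \<tau>\<^sub>i\<^sub>i)\<close>, and this energy gap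
  is positive by hypothesis. A union bound over the pairs of observations finishes the proof.\<close>

section \<open>Second moments and Chebyshev's inequality for sums\<close>

lemma integrable_mult_of_square_integrable:
  fixes f g :: "'a \<Rightarrow> real"
  assumes [measurable]: "f \<in> borel_measurable M" "g \<in> borel_measurable M"
    and "integrable M (\<lambda>x. (f x)^2)" "integrable M (\<lambda>x. (g x)^2)"
  shows "integrable M (\<lambda>x. f x * g x)"
proof (rule Bochner_Integration.integrable_bound)
  show "integrable M (\<lambda>x. (f x)^2 + (g x)^2)" using assms by auto
  show "AE x in M. norm (f x * g x) \<le> norm ((f x)^2 + (g x)^2)"
  proof (intro AE_I2)
    fix x
    have "2 * (\<bar>f x\<bar> * \<bar>g x\<bar>) \<le> (f x)^2 + (g x)^2"
      using sum_squares_bound[of "\<bar>f x\<bar>" "\<bar>g x\<bar>"] by (simp add: mult.assoc)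
    moreover have "0 \<le> \<bar>f x\<bar> * \<bar>g x\<bar>" by simp
    ultimately have "\<bar>f x\<bar> * \<bar>g x\<bar> \<le> (f x)^2 + (g x)^2" by linarith
    then show "norm (f x * g x) \<le> norm ((f x)^2 + (g x)^2)"
      by (simp add: abs_mult)
  qed
qed simp

lemma (in finite_measure) square_integrable_diff_const:
  fixes f :: "'a \<Rightarrow> real"
  assumes [measurable]: "f \<in> borel_measurable M" and f2: "integrable M (\<lambda>x. (f x)^2)"
  shows "integrable M (\<lambda>x. (f x - c)^2)"
proof -
  have "integrable M f" using square_integrable_imp_integrable[OF _ f2] by simp
  then have "integrable M (\<lambda>x. (f x)^2 - 2 * c * f x + c^2)" using f2 by auto
  then show ?thesis by (simp add: power2_diff algebra_simps)
qed

context prob_space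
begin

lemma covariance_self: "covariance M f f = variance f"
  unfolding covariance_def by (simp add: power2_eq_square)

lemma covariance_self_nonneg: "0 \<le> covariance M f f"
  unfolding covariance_def by (intro integral_nonneg_AE) auto

lemma covariance_self_le_second_moment:
  fixes f :: "'a \<Rightarrow> real"
  assumes [measurable]: "f \<in> borel_measurable M" and f2: "integrable M (\<lambda>x. (f x)^2)"
  shows "covariance M f f \<le> expectation (\<lambda>x. (f x)^2)"
  using variance_eq[OF square_integrable_imp_integrable[OF _ f2] f2]
  by (simp add: covariance_self)

lemma covariance_eq_0_if_self_eq_0:
  fixes f g :: "'a \<Rightarrow> real"
  assumes [measurable]: "f \<in> borel_measurable M" "g \<in> borel_measurable M"
    and f2: "integrable M (\<lambda>x. (f x)^2)" and f0: "covariance M f f = 0"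
  shows "covariance M f g = 0"
proof -
  have "AE x in M. (f x - expectation f)^2 = 0"
    using f0 square_integrable_diff_const[OF _ f2]
    by (subst integral_nonneg_eq_0_iff_AE[symmetric]) (auto simp: covariance_self)
  then have "AE x in M. (f x - expectation f) * (g x - expectation g) = 0"
    by eventually_elim simp
  then have "expectation (\<lambda>x. (f x - expectation f) * (g x - expectation g)) = expectation (\<lambda>_. 0)"
    by (intro integral_cong_AE) auto
  then show ?thesis
    unfolding covariance_def by simp
qed

lemma abs_covariance_le_correlation:
  fixes f g :: "'a \<Rightarrow> real"
  assumes [measurable]: "f \<in> borel_measurable M" "g \<in> borel_measurable M"
    and f2: "integrable M (\<lambda>x. (f x)^2)" and g2: "integrable M (\<lambda>x. (g x)^2)"
    and Kf: "covariance M f f \<le> K" and Kg: "covariance M g g \<le> K"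
  shows "\<bar>covariance M f g\<bar> \<le> \<bar>correlation M f g\<bar> * K"
proof (cases "covariance M f f = 0 \<or> covariance M g g = 0")
  case True
  have "covariance M g f = covariance M f g"
    unfolding covariance_def by (simp add: mult.commute)
  with True have "covariance M f g = 0"
    using covariance_eq_0_if_self_eq_0[of f g] covariance_eq_0_if_self_eq_0[of g f] f2 g2
    by auto
  moreover have "0 \<le> K" using Kf covariance_self_nonneg[of f] by linarith
  ultimately show ?thesis by simp
next
  case False
  let ?s = "sqrt (covariance M f f) * sqrt (covariance M g g)"
  have nonneg: "0 \<le> covariance M f f" "0 \<le> covariance M g g"
    by (rule covariance_self_nonneg)+
  with False have "0 < ?s" by auto
  then have "covariance M f g = correlation M f g * ?s"
    using False nonneg unfolding correlation_def by simp
  moreover have "?s \<le> sqrt K * sqrt K"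
    using nonneg Kf Kg by (intro mult_mono) auto
  ultimately show ?thesis
    using nonneg Kf \<open>0 < ?s\<close> by (simp add: abs_mult mult_left_mono)
qed

lemma square_integrable_sum:
  fixes U :: "'i \<Rightarrow> 'a \<Rightarrow> real"
  assumes [measurable]: "\<And>r. r \<in> I \<Longrightarrow> U r \<in> borel_measurable M"
    and U2: "\<And>r. r \<in> I \<Longrightarrow> integrable M (\<lambda>x. (U r x)^2)"
  shows "integrable M (\<lambda>x. (\<Sum>r\<in>I. U r x)^2)"
  unfolding power2_eq_square sum_product
  using integrable_mult_of_square_integrable[OF _ _ U2 U2] by simp

lemma variance_sum:
  fixes U :: "'i \<Rightarrow> 'a \<Rightarrow> real"
  assumes [measurable]: "\<And>r. r \<in> I \<Longrightarrow> U r \<in> borel_measurable M"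
    and U2: "\<And>r. r \<in> I \<Longrightarrow> integrable M (\<lambda>x. (U r x)^2)"
  shows "variance (\<lambda>x. \<Sum>r\<in>I. U r x) = (\<Sum>r\<in>I. \<Sum>s\<in>I. covariance M (U r) (U s))"
proof -
  let ?V = "\<lambda>r x. U r x - expectation (U r)"
  have "expectation (\<lambda>x. \<Sum>r\<in>I. U r x) = (\<Sum>r\<in>I. expectation (U r))"
    using square_integrable_imp_integrable[OF _ U2] by (simp add: integral_sum)
  then have "variance (\<lambda>x. \<Sum>r\<in>I. U r x) = expectation (\<lambda>x. \<Sum>r\<in>I. \<Sum>s\<in>I. ?V r x * ?V s x)"
    by (simp add: power2_eq_square sum_product sum_subtractf[symmetric])
  also have "\<dots> = (\<Sum>r\<in>I. \<Sum>s\<in>I. covariance M (U r) (U s))"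
    unfolding covariance_def
    using integrable_mult_of_square_integrable[OF _ _ square_integrable_diff_const[OF _ U2]
        square_integrable_diff_const[OF _ U2]]
    by (simp add: integral_sum)
  finally show ?thesis .
qed

lemma Chebyshev_inequality_sum:
  fixes U :: "'i \<Rightarrow> 'a \<Rightarrow> real"
  assumes I: "finite I" and U_meas[measurable]: "\<And>r. r \<in> I \<Longrightarrow> U r \<in> borel_measurable M"
    and U2: "\<And>r. r \<in> I \<Longrightarrow> integrable M (\<lambda>x. (U r x)^2)"
    and K: "\<And>r. r \<in> I \<Longrightarrow> expectation (\<lambda>x. (U r x)^2) \<le> K"
    and e: "0 < e"
  shows "prob {x \<in> space M. e \<le> \<bar>(\<Sum>r\<in>I. U r x) - (\<Sum>r\<in>I. expectation (U r))\<bar>}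
    \<le> (K * card I + K * (\<Sum>r\<in>I. \<Sum>s\<in>I - {r}. \<bar>correlation M (U r) (U s)\<bar>)) / e^2"
proof -
  have KU: "covariance M (U r) (U r) \<le> K" if r: "r \<in> I" for r
    using covariance_self_le_second_moment[OF U_meas[OF r] U2[OF r]] K[OF r] by linarith
  have sum_meas: "(\<lambda>x. \<Sum>r\<in>I. U r x) \<in> borel_measurable M"
    by (rule borel_measurable_sum) (rule U_meas)
  have "expectation (\<lambda>x. \<Sum>r\<in>I. U r x) = (\<Sum>r\<in>I. expectation (U r))"
    using square_integrable_imp_integrable[OF _ U2] by (simp add: integral_sum)
  then have "prob {x \<in> space M. e \<le> \<bar>(\<Sum>r\<in>I. U r x) - (\<Sum>r\<in>I. expectation (U r))\<bar>}
      \<le> variance (\<lambda>x. \<Sum>r\<in>I. U r x) / e^2"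
    using Chebyshev_inequality[OF sum_meas square_integrable_sum[OF U_meas U2] e] by simp
  also have "variance (\<lambda>x. \<Sum>r\<in>I. U r x) = (\<Sum>r\<in>I. \<Sum>s\<in>I. covariance M (U r) (U s))"
    by (rule variance_sum[OF U_meas U2])
  also have "\<dots> = (\<Sum>r\<in>I. covariance M (U r) (U r) + (\<Sum>s\<in>I - {r}. covariance M (U r) (U s)))"
    using I by (intro sum.cong refl) (simp add: sum.remove)
  also have "\<dots> \<le> (\<Sum>r\<in>I. K + (\<Sum>s\<in>I - {r}. \<bar>correlation M (U r) (U s)\<bar> * K))"
    using abs_covariance_le_correlation[OF _ _ U2 U2 KU KU]
    by (intro sum_mono add_mono KU) (auto simp: abs_le_iff)
  finally show ?thesis
    using e by (simp add: sum.distrib sum_distrib_left mult.commute divide_right_mono)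
qed

end

context pair_prob_space
begin

lemma distr_pair_snd: "distr (M1 \<Otimes>\<^sub>M M2) M2 snd = M2"
proof (intro measure_eqI)
  fix A assume A: "A \<in> sets (distr (M1 \<Otimes>\<^sub>M M2) M2 snd)"
  then have "emeasure (distr (M1 \<Otimes>\<^sub>M M2) M2 snd) A = emeasure (M1 \<Otimes>\<^sub>M M2) (space M1 \<times> A)"
    by (auto simp: emeasure_distr space_pair_measure dest: sets.sets_into_space
        intro!: arg_cong2[where f = emeasure])
  with A show "emeasure (distr (M1 \<Otimes>\<^sub>M M2) M2 snd) A = emeasure M2 A"
    by (simp add: M2.emeasure_pair_measure_Times M1.emeasure_space_1)
qed simp

lemma
  fixes f :: "_ \<Rightarrow> real"
  assumes f: "f \<in> borel_measurable M1" "integrable M1 f"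
  shows integrable_comp_fst: "integrable (M1 \<Otimes>\<^sub>M M2) (\<lambda>p. f (fst p))"
    and integral_comp_fst: "(\<integral>p. f (fst p) \<partial>(M1 \<Otimes>\<^sub>M M2)) = integral\<^sup>L M1 f"
  using integrable_distr_eq[OF measurable_fst[of M1 M2] f(1)]
    integral_distr[OF measurable_fst[of M1 M2] f(1)] f(2) M2.distr_pair_fst[of M1]
  by simp_all

lemma
  fixes g :: "_ \<Rightarrow> real"
  assumes g: "g \<in> borel_measurable M2" "integrable M2 g"
  shows integrable_comp_snd: "integrable (M1 \<Otimes>\<^sub>M M2) (\<lambda>p. g (snd p))"
    and integral_comp_snd: "(\<integral>p. g (snd p) \<partial>(M1 \<Otimes>\<^sub>M M2)) = integral\<^sup>L M2 g"
  using integrable_distr_eq[OF measurable_snd[of M1 M2] g(1)]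
    integral_distr[OF measurable_snd[of M1 M2] g(1)] g(2) distr_pair_snd
  by simp_all

lemma
  fixes f g :: "_ \<Rightarrow> real"
  assumes [measurable]: "f \<in> borel_measurable M1" "g \<in> borel_measurable M2"
    and f2: "integrable M1 (\<lambda>x. (f x)^2)" and g2: "integrable M2 (\<lambda>y. (g y)^2)"
  shows square_integrable_abs_diff: "integrable (M1 \<Otimes>\<^sub>M M2) (\<lambda>p. \<bar>f (fst p) - g (snd p)\<bar>^2)"
    and second_moment_abs_diff_le: "expectation (\<lambda>p. \<bar>f (fst p) - g (snd p)\<bar>^2)
      \<le> 2 * M1.expectation (\<lambda>x. (f x)^2) + 2 * M2.expectation (\<lambda>y. (g y)^2)"
proof -
  let ?h = "\<lambda>p. 2 * (f (fst p))^2 + 2 * (g (snd p))^2"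
  have h: "integrable (M1 \<Otimes>\<^sub>M M2) ?h"
    using integrable_comp_fst[of "\<lambda>x. (f x)^2"] integrable_comp_snd[of "\<lambda>y. (g y)^2"] f2 g2 by simp
  have le: "\<bar>f (fst p) - g (snd p)\<bar>^2 \<le> ?h p" for p
    using sum_squares_bound[of "f (fst p)" "- g (snd p)"] by (simp add: power2_diff)
  show int: "integrable (M1 \<Otimes>\<^sub>M M2) (\<lambda>p. \<bar>f (fst p) - g (snd p)\<bar>^2)"
    using le by (intro Bochner_Integration.integrable_bound[OF h]) auto
  have "expectation (\<lambda>p. \<bar>f (fst p) - g (snd p)\<bar>^2) \<le> expectation ?h"
    using int h le by (intro integral_mono) auto
  also have "\<dots> = 2 * M1.expectation (\<lambda>x. (f x)^2) + 2 * M2.expectation (\<lambda>y. (g y)^2)"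
    using integrable_comp_fst[of "\<lambda>x. (f x)^2"] integrable_comp_snd[of "\<lambda>y. (g y)^2"]
      integral_comp_fst[of "\<lambda>x. (f x)^2"] integral_comp_snd[of "\<lambda>y. (g y)^2"] f2 g2
    by simp
  finally show "expectation (\<lambda>p. \<bar>f (fst p) - g (snd p)\<bar>^2)
      \<le> 2 * M1.expectation (\<lambda>x. (f x)^2) + 2 * M2.expectation (\<lambda>y. (g y)^2)" .
qed

end

section \<open>Concentration of the \<open>l\<^sub>1\<close> distance between independent points\<close>

definition mad_avg :: "nat \<Rightarrow> (nat \<Rightarrow> real) measure \<Rightarrow> (nat \<Rightarrow> real) measure \<Rightarrow> real" where
  "mad_avg d P Q = (\<Sum>q<d. mad P Q q) / real d"

definition abs_corr_sum :: "nat \<Rightarrow> (nat \<Rightarrow> real) measure \<Rightarrow> (nat \<Rightarrow> real) measure \<Rightarrow> real" where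
  "abs_corr_sum d P Q = (\<Sum>r<d. \<Sum>s\<in>{..<d} - {r}.
     \<bar>correlation (P \<Otimes>\<^sub>M Q) (\<lambda>xy. \<bar>fst xy r - snd xy r\<bar>) (\<lambda>xy. \<bar>fst xy s - snd xy s\<bar>)\<bar>)"

definition l1_deviation_event ::
  "nat \<Rightarrow> real \<Rightarrow> real \<Rightarrow> (nat \<Rightarrow> real) measure \<Rightarrow> (nat \<Rightarrow> real) measure
    \<Rightarrow> ((nat \<Rightarrow> real) \<times> (nat \<Rightarrow> real)) set" where
  "l1_deviation_event d \<tau> \<epsilon> P Q =
     {p \<in> space (P \<Otimes>\<^sub>M Q). real d * \<epsilon> < \<bar>l1dist d (fst p) (snd p) - real d * \<tau>\<bar>}"

lemma l1dist_commute: "l1dist d u v = l1dist d v u"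
  unfolding l1dist_def by (simp add: abs_minus_commute)

lemma measurable_coordinate:
  assumes "sets P = sets (PiM {..<d} (\<lambda>_. borel))" and "q < d"
  shows "(\<lambda>x. x q) \<in> borel_measurable P"
  using assms(2) by (simp add: measurable_cong_sets[OF assms(1) refl])

lemma borel_measurable_l1dist_pair:
  assumes "sets P = sets (PiM {..<d} (\<lambda>_. borel))" "sets Q = sets (PiM {..<d} (\<lambda>_. borel))"
  shows "(\<lambda>p. l1dist d (fst p) (snd p)) \<in> borel_measurable (P \<Otimes>\<^sub>M Q)"
proof -
  have "(\<lambda>p. fst p q) \<in> borel_measurable (P \<Otimes>\<^sub>M Q)" "(\<lambda>p. snd p q) \<in> borel_measurable (P \<Otimes>\<^sub>M Q)"
    if "q < d" for q
    using measurable_compose[OF measurable_fst[of P Q] measurable_coordinate[OF assms(1) that]]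
      measurable_compose[OF measurable_snd[of P Q] measurable_coordinate[OF assms(2) that]]
    by simp_all
  then show ?thesis
    unfolding l1dist_def by (intro borel_measurable_sum borel_measurable_abs borel_measurable_diff) auto
qed

lemma l1_deviation_event_sets:
  assumes "sets P = sets (PiM {..<d} (\<lambda>_. borel))" "sets Q = sets (PiM {..<d} (\<lambda>_. borel))"
  shows "l1_deviation_event d \<tau> \<epsilon> P Q \<in> sets (P \<Otimes>\<^sub>M Q)"
  unfolding l1_deviation_event_def using borel_measurable_l1dist_pair[OF assms] by measurable

lemma prob_l1dist_deviation_le:
  fixes P Q :: "(nat \<Rightarrow> real) measure"
  assumes "pair_prob_space P Q"
    and sets_P: "sets P = sets (PiM {..<d} (\<lambda>_. borel))"
    and sets_Q: "sets Q = sets (PiM {..<d} (\<lambda>_. borel))"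
    and P2: "\<forall>q<d. integrable P (\<lambda>x. (x q)^2) \<and> (\<integral>x. (x q)^2 \<partial>P) \<le> C\<^sub>P"
    and Q2: "\<forall>q<d. integrable Q (\<lambda>x. (x q)^2) \<and> (\<integral>x. (x q)^2 \<partial>Q) \<le> C\<^sub>Q"
    and e: "0 < e"
  shows "measure (P \<Otimes>\<^sub>M Q)
      {p \<in> space (P \<Otimes>\<^sub>M Q). e \<le> \<bar>l1dist d (fst p) (snd p) - (\<Sum>q<d. mad P Q q)\<bar>}
    \<le> (2 * (C\<^sub>P + C\<^sub>Q) * real d + 2 * (C\<^sub>P + C\<^sub>Q) * abs_corr_sum d P Q) / e^2"
proof -
  interpret pair_prob_space P Q by fact
  define U where "U = (\<lambda>r (p :: (nat \<Rightarrow> real) \<times> (nat \<Rightarrow> real)). \<bar>fst p r - snd p r\<bar>)"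
  have meas: "(\<lambda>x. x r) \<in> borel_measurable P" "(\<lambda>y. y r) \<in> borel_measurable Q" if "r < d" for r
    using measurable_coordinate[OF sets_P that] measurable_coordinate[OF sets_Q that] .
  have U_meas: "U r \<in> borel_measurable (P \<Otimes>\<^sub>M Q)" if "r < d" for r
    unfolding U_def using meas[OF that] by measurable
  have U2: "integrable (P \<Otimes>\<^sub>M Q) (\<lambda>p. (U r p)^2)"
    and U2_le: "expectation (\<lambda>p. (U r p)^2) \<le> 2 * (C\<^sub>P + C\<^sub>Q)" if "r < d" for r
    using square_integrable_abs_diff[OF meas[OF that]] second_moment_abs_diff_le[OF meas[OF that]]
      P2 Q2 that
    by (fastforce simp: U_def)+
  have "expectation (U r) = mad P Q r" for r
    unfolding U_def mad_def ..
  moreover have "l1dist d (fst p) (snd p) = (\<Sum>r<d. U r p)" for p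
    unfolding U_def l1dist_def ..
  ultimately show ?thesis
    using Chebyshev_inequality_sum[of "{..<d}" U "2 * (C\<^sub>P + C\<^sub>Q)", OF _ U_meas U2 U2_le e]
    by (simp add: abs_corr_sum_def U_def mult.commute)
qed

lemma l1_deviation_event_subset:
  assumes "\<bar>(\<Sum>q<d. mad P Q q) - real d * \<tau>\<bar> \<le> real d * \<epsilon> / 2"
  shows "l1_deviation_event d \<tau> \<epsilon> P Q \<subseteq>
    {p \<in> space (P \<Otimes>\<^sub>M Q). real d * \<epsilon> / 2 \<le> \<bar>l1dist d (fst p) (snd p) - (\<Sum>q<d. mad P Q q)\<bar>}"
proof -
  have "real d * \<epsilon> / 2 \<le> \<bar>l1dist d (fst p) (snd p) - (\<Sum>q<d. mad P Q q)\<bar>"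
    if "real d * \<epsilon> < \<bar>l1dist d (fst p) (snd p) - real d * \<tau>\<bar>" for p
    using that assms
      abs_triangle_ineq[of "l1dist d (fst p) (snd p) - (\<Sum>q<d. mad P Q q)" "(\<Sum>q<d. mad P Q q) - real d * \<tau>"]
    by simp
  then show ?thesis
    unfolding l1_deviation_event_def by auto
qed

lemma l1_deviation_event_tendsto_0:
  fixes P Q :: "nat \<Rightarrow> (nat \<Rightarrow> real) measure"
  assumes prob_P: "\<And>d. prob_space (P d)" and prob_Q: "\<And>d. prob_space (Q d)"
    and sets_P: "\<And>d. sets (P d) = sets (PiM {..<d} (\<lambda>_. borel))"
    and sets_Q: "\<And>d. sets (Q d) = sets (PiM {..<d} (\<lambda>_. borel))"
    and P2: "\<exists>C. \<forall>d. \<forall>q<d. integrable (P d) (\<lambda>x. (x q)^2) \<and> (\<integral>x. (x q)^2 \<partial>P d) \<le> C"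
    and Q2: "\<exists>C. \<forall>d. \<forall>q<d. integrable (Q d) (\<lambda>x. (x q)^2) \<and> (\<integral>x. (x q)^2 \<partial>Q d) \<le> C"
    and corr: "(\<lambda>d. abs_corr_sum d (P d) (Q d) / (real d)^2) \<longlonglongrightarrow> 0"
    and avg: "(\<lambda>d. mad_avg d (P d) (Q d)) \<longlonglongrightarrow> \<tau>"
    and e: "0 < \<epsilon>"
  shows "(\<lambda>d. measure (P d \<Otimes>\<^sub>M Q d) (l1_deviation_event d \<tau> \<epsilon> (P d) (Q d))) \<longlonglongrightarrow> 0"
proof -
  from P2 Q2 obtain C\<^sub>P C\<^sub>Q where
    P2: "\<And>d. \<forall>q<d. integrable (P d) (\<lambda>x. (x q)^2) \<and> (\<integral>x. (x q)^2 \<partial>P d) \<le> C\<^sub>P" and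
    Q2: "\<And>d. \<forall>q<d. integrable (Q d) (\<lambda>x. (x q)^2) \<and> (\<integral>x. (x q)^2 \<partial>Q d) \<le> C\<^sub>Q"
    by blast
  have prob: "pair_prob_space (P d) (Q d)" for d
    using prob_P prob_Q by (simp add: pair_prob_space_def pair_sigma_finite_def prob_space_imp_sigma_finite)
  define c where "c = 8 * (C\<^sub>P + C\<^sub>Q) / \<epsilon>^2"
  show ?thesis
  proof (rule tendsto_sandwich[OF _ _ tendsto_const])
    show "(\<lambda>d. c / real d + c * (abs_corr_sum d (P d) (Q d) / (real d)^2)) \<longlonglongrightarrow> 0"
      using tendsto_add[OF lim_const_over_n tendsto_mult[OF tendsto_const corr]] by simp
    show "\<forall>\<^sub>F d in sequentially. 0 \<le> measure (P d \<Otimes>\<^sub>M Q d) (l1_deviation_event d \<tau> \<epsilon> (P d) (Q d))"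
      by simp
    have "\<forall>\<^sub>F d in sequentially. \<bar>mad_avg d (P d) (Q d) - \<tau>\<bar> < \<epsilon> / 2"
      using avg[unfolded tendsto_iff dist_real_def, rule_format, of "\<epsilon> / 2"] e by simp
    then show "\<forall>\<^sub>F d in sequentially. measure (P d \<Otimes>\<^sub>M Q d) (l1_deviation_event d \<tau> \<epsilon> (P d) (Q d))
        \<le> c / real d + c * (abs_corr_sum d (P d) (Q d) / (real d)^2)"
      using eventually_gt_at_top[of 0]
    proof eventually_elim
      case (elim d)
      interpret pair_prob_space "P d" "Q d" by (rule prob)
      have "(\<Sum>q<d. mad (P d) (Q d) q) - real d * \<tau> = real d * (mad_avg d (P d) (Q d) - \<tau>)"
        using elim by (simp add: mad_avg_def field_simps)
      then have "\<bar>(\<Sum>q<d. mad (P d) (Q d) q) - real d * \<tau>\<bar> \<le> real d * \<epsilon> / 2"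
        using elim by (simp add: abs_mult mult_left_mono)
      from l1_deviation_event_subset[OF this]
      have "measure (P d \<Otimes>\<^sub>M Q d) (l1_deviation_event d \<tau> \<epsilon> (P d) (Q d))
          \<le> measure (P d \<Otimes>\<^sub>M Q d) {p \<in> space (P d \<Otimes>\<^sub>M Q d).
               real d * \<epsilon> / 2 \<le> \<bar>l1dist d (fst p) (snd p) - (\<Sum>q<d. mad (P d) (Q d) q)\<bar>}"
        using borel_measurable_l1dist_pair[OF sets_P sets_Q] by (intro finite_measure_mono) measurable
      also have "\<dots> \<le> (2 * (C\<^sub>P + C\<^sub>Q) * real d + 2 * (C\<^sub>P + C\<^sub>Q) * abs_corr_sum d (P d) (Q d))
          / (real d * \<epsilon> / 2)^2"
        using elim e by (intro prob_l1dist_deviation_le prob sets_P sets_Q P2 Q2) auto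
      also have "\<dots> = c / real d + c * (abs_corr_sum d (P d) (Q d) / (real d)^2)"
        using elim e by (simp add: c_def field_simps power2_eq_square)
      finally show ?case .
    qed
  qed
qed

section \<open>The MDist1 decision when all distances concentrate\<close>

lemma abs_Min_image_diff_le:
  fixes f :: "'a \<Rightarrow> real"
  assumes "finite A" "A \<noteq> {}" "\<And>a. a \<in> A \<Longrightarrow> \<bar>f a - m\<bar> \<le> r"
  shows "\<bar>Min (f ` A) - m\<bar> \<le> r"
proof -
  have "Min (f ` A) \<in> f ` A" using assms(1,2) by (intro Min_in) auto
  then show ?thesis using assms(3) by auto
qed

lemma test_features_close:
  assumes "1 \<le> n k" "\<And>l. l \<in> {1..n k} \<Longrightarrow> \<bar>l1dist d z (x (k, l)) - m\<bar> \<le> r"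
  shows "\<bar>test_features d n x z k - m\<bar> \<le> r"
  unfolding test_features_def using assms by (intro abs_Min_image_diff_le) auto

lemma train_features_close:
  assumes "2 \<le> n k"
    and "\<And>l'. l' \<in> {1..n k} \<Longrightarrow> (k, l') \<noteq> (i, l) \<Longrightarrow> \<bar>l1dist d (x (i, l)) (x (k, l')) - m\<bar> \<le> r"
  shows "\<bar>train_features d n x (i, l) k - m\<bar> \<le> r"
proof -
  have "(if l = 1 then 2 else 1) \<in> {l' \<in> {1..n k}. (k, l') \<noteq> (i, l)}"
    using assms(1) by auto
  then show ?thesis
    unfolding train_features_def using assms(2) by (intro abs_Min_image_diff_le) auto
qed

lemma abs_le_feat_dist:
  assumes "k \<in> {1..J}"
  shows "\<bar>a k - b k\<bar> \<le> feat_dist J a b"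
proof -
  have "(a k - b k)^2 \<le> (\<Sum>k\<in>{1..J}. (a k - b k)^2)"
    using assms by (intro member_le_sum) auto
  then show ?thesis
    unfolding feat_dist_def using real_sqrt_le_mono by fastforce
qed

lemma feat_dist_le:
  assumes "0 \<le> t" and "\<And>k. k \<in> {1..J} \<Longrightarrow> \<bar>a k - b k\<bar> \<le> t"
  shows "feat_dist J a b \<le> real J * t"
proof -
  have "(\<Sum>k\<in>{1..J}. (a k - b k)^2) \<le> (\<Sum>k\<in>{1..J}. t^2)"
    using assms by (intro sum_mono) (metis abs_ge_zero power2_abs power_mono)
  also have "\<dots> \<le> (real J * real J) * t^2"
    using le_square[of J] by (simp del: of_nat_mult add: of_nat_mult[symmetric] mult_right_mono)
  also have "\<dots> = (real J * t)^2"
    by (simp add: power_mult_distrib power2_eq_square)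
  finally show ?thesis
    unfolding feat_dist_def using assms(1) real_sqrt_le_mono by fastforce
qed

text \<open>Observations are indexed by \<open>None\<close> for the test point and by \<open>Some (k, l)\<close>
  for the training point \<open>X\<^sub>k\<^sub>l\<close>.\<close>

definition observations :: "nat \<Rightarrow> (nat \<Rightarrow> nat) \<Rightarrow> (nat \<times> nat) option set" where
  "observations J n = insert None (Some ` (SIGMA k:{1..J}. {1..n k}))"

definition observation ::
  "(nat \<times> nat) option \<Rightarrow> (nat \<times> nat \<Rightarrow> nat \<Rightarrow> real) \<times> (nat \<Rightarrow> real) \<Rightarrow> nat \<Rightarrow> real" where
  "observation a \<omega> = (case a of None \<Rightarrow> snd \<omega> | Some s \<Rightarrow> fst \<omega> s)"

definition observation_class :: "nat \<Rightarrow> (nat \<times> nat) option \<Rightarrow> nat" where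
  "observation_class j0 a = (case a of None \<Rightarrow> j0 | Some s \<Rightarrow> fst s)"

lemma observation_simps [simp]:
  "observation None \<omega> = snd \<omega>" "observation (Some s) \<omega> = fst \<omega> s"
  "observation_class j0 None = j0" "observation_class j0 (Some (k, l)) = k"
  by (simp_all add: observation_def observation_class_def)

lemma mem_observations [simp]:
  "None \<in> observations J n" "Some (k, l) \<in> observations J n \<longleftrightarrow> k \<in> {1..J} \<and> l \<in> {1..n k}"
  by (auto simp: observations_def)

lemma observation_class_in:
  "j0 \<in> {1..J} \<Longrightarrow> a \<in> observations J n \<Longrightarrow> observation_class j0 a \<in> {1..J}"
  by (auto simp: observations_def)

lemma finite_observations: "finite (observations J n)"
  by (simp add: observations_def)

lemma not_misclassified_if_l1dists_close:
  fixes x :: "nat \<times> nat \<Rightarrow> nat \<Rightarrow> real" and z :: "nat \<Rightarrow> real"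
  assumes n: "\<forall>j\<in>{1..J}. n j \<ge> 2" and j0: "j0 \<in> {1..J}" and c: "0 < c"
    and close: "\<And>a b. a \<in> observations J n \<Longrightarrow> b \<in> observations J n \<Longrightarrow> a \<noteq> b \<Longrightarrow>
      \<bar>l1dist d (observation a (x, z)) (observation b (x, z))
        - c * \<tau> (observation_class j0 a) (observation_class j0 b)\<bar> \<le> c * \<epsilon>"
    and gap: "\<And>i. i \<in> {1..J} \<Longrightarrow> i \<noteq> j0 \<Longrightarrow> 4 * (real J + 1) * \<epsilon> < 2 * \<tau> j0 i - \<tau> j0 j0 - \<tau> i i"
  shows "\<not> mdist1_misclassified d J n x z j0"
proof
  define tf where "tf = test_features d n x z"
  define g where "g = train_features d n x"
  have n2: "2 \<le> n k" if "k \<in> {1..J}" for k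
    using n that by blast
  have tf: "\<bar>tf k - c * \<tau> j0 k\<bar> \<le> c * \<epsilon>" if k: "k \<in> {1..J}" for k
    unfolding tf_def using n2[OF k] k close[of None "Some (k, _)"]
    by (intro test_features_close) auto
  have g: "\<bar>g (i, l) k - c * \<tau> i k\<bar> \<le> c * \<epsilon>" "\<bar>g (i, l) k - c * \<tau> k i\<bar> \<le> c * \<epsilon>"
    if i: "i \<in> {1..J}" and l: "l \<in> {1..n i}" and k: "k \<in> {1..J}" for i l k
  proof -
    have "\<bar>l1dist d (x (i, l)) (x (k, l')) - c * \<tau> i k\<bar> \<le> c * \<epsilon>"
      "\<bar>l1dist d (x (i, l)) (x (k, l')) - c * \<tau> k i\<bar> \<le> c * \<epsilon>"
      if "l' \<in> {1..n k}" "(k, l') \<noteq> (i, l)" for l'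
      using close[of "Some (i, l)" "Some (k, l')"] close[of "Some (k, l')" "Some (i, l)"] i l k that
      by (auto simp: l1dist_commute)
    then show "\<bar>g (i, l) k - c * \<tau> i k\<bar> \<le> c * \<epsilon>" "\<bar>g (i, l) k - c * \<tau> k i\<bar> \<le> c * \<epsilon>"
      unfolding g_def using n2[OF k] by (blast intro: train_features_close)+
  qed
  have "0 \<le> c * \<epsilon>" using tf[OF j0] by linarith
  then have own: "feat_dist J tf (g (j0, l)) \<le> real J * (2 * (c * \<epsilon>))" if "l \<in> {1..n j0}" for l
    using tf g(1)[OF j0 that] by (intro feat_dist_le) (fastforce simp: abs_le_iff)+
  have other: "c * (2 * \<tau> j0 i - \<tau> j0 j0 - \<tau> i i) - 4 * (c * \<epsilon>) \<le> 2 * feat_dist J tf (g (i, l))"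
    if i: "i \<in> {1..J}" and l: "l \<in> {1..n i}" for i l
    using tf[OF i] tf[OF j0] g(1)[OF i l i] g(2)[OF i l j0]
      abs_le_feat_dist[OF i, of tf "g (i, l)"] abs_le_feat_dist[OF j0, of tf "g (i, l)"]
    by (simp add: abs_le_iff algebra_simps)
  assume "mdist1_misclassified d J n x z j0"
  then obtain i l where i: "i \<in> {1..J}" "i \<noteq> j0" and l: "l \<in> {1..n i}"
    and nearer: "feat_dist J tf (g (i, l)) \<le> feat_dist J tf (g (j0, 1))"
    using n j0 unfolding mdist1_misclassified_def tf_def g_def by fastforce
  have "1 \<in> {1..n j0}" using n2[OF j0] by simp
  then have "feat_dist J tf (g (i, l)) \<le> 2 * (real J * (c * \<epsilon>))"
    using own nearer by fastforce
  moreover have "c * (4 * (real J + 1) * \<epsilon>) < c * (2 * \<tau> j0 i - \<tau> j0 j0 - \<tau> i i)"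
    using gap[OF i] c by simp
  then have "4 * (real J * (c * \<epsilon>)) + 4 * (c * \<epsilon>) < c * (2 * \<tau> j0 i - \<tau> j0 j0 - \<tau> i i)"
    by (simp add: algebra_simps)
  ultimately show False
    using other[OF i(1) l] by linarith
qed

section \<open>The joint law of the test and training points\<close>

lemma PiM_eqI_prob_space:
  assumes I: "finite I" and M: "\<And>i. i \<in> I \<Longrightarrow> prob_space (M i)"
    and sets_P: "sets P = sets (PiM I M)"
    and eq: "\<And>A. (\<And>i. i \<in> I \<Longrightarrow> A i \<in> sets (M i)) \<Longrightarrow>
      emeasure P (Pi\<^sub>E I A) = (\<Prod>i\<in>I. emeasure (M i) (A i))"
  shows "P = PiM I M"
proof -
  let ?M = "\<lambda>i. if i \<in> I then M i else count_space {undefined}"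
  interpret product_sigma_finite ?M
    using M by (auto simp: product_sigma_finite_def prob_space_imp_sigma_finite
        intro: finite_measure.sigma_finite_measure finite_measure_count_space)
  have "PiM I M = PiM I ?M" by (rule PiM_cong) auto
  moreover have "P = PiM I ?M"
    using sets_P eq \<open>PiM I M = PiM I ?M\<close> by (intro PiM_eqI I) auto
  ultimately show ?thesis by simp
qed

lemma distr_PiM_pair_components:
  assumes M: "\<And>i. i \<in> I \<Longrightarrow> prob_space (M i)" and st: "s \<in> I" "t \<in> I" "s \<noteq> t"
  shows "distr (PiM I M) (M s \<Otimes>\<^sub>M M t) (\<lambda>x. (x s, x t)) = M s \<Otimes>\<^sub>M M t"
proof (rule pair_measure_eqI[symmetric])
  show "sigma_finite_measure (M s)" "sigma_finite_measure (M t)"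
    using M st by (auto intro: prob_space_imp_sigma_finite)
  fix A B assume A: "A \<in> sets (M s)" and B: "B \<in> sets (M t)"
  let ?Y = "\<lambda>i. if i = s then A else B"
  have "(\<lambda>x. (x s, x t)) -` (A \<times> B) \<inter> space (PiM I M) = prod_emb I M {s, t} (Pi\<^sub>E {s, t} ?Y)"
    using st by (auto simp: prod_emb_def space_PiM)
  moreover have "emeasure (PiM I M) (prod_emb I M {s, t} (Pi\<^sub>E {s, t} ?Y))
      = emeasure (M s) A * emeasure (M t) B"
    using M st A B by (subst emeasure_PiM_emb) auto
  ultimately show "emeasure (M s) A * emeasure (M t) B
      = emeasure (distr (PiM I M) (M s \<Otimes>\<^sub>M M t) (\<lambda>x. (x s, x t))) (A \<times> B)"
    using st A B by (simp add: emeasure_distr)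
qed simp

context
  fixes d J j0 :: nat and n :: "nat \<Rightarrow> nat" and F :: "nat \<Rightarrow> nat \<Rightarrow> (nat \<Rightarrow> real) measure"
  assumes j0: "j0 \<in> {1..J}" and F_prob: "\<And>k. k \<in> {1..J} \<Longrightarrow> prob_space (F d k)"
begin

lemma prob_space_observation_class:
  "a \<in> observations J n \<Longrightarrow> prob_space (F d (observation_class j0 a))"
  using F_prob observation_class_in[OF j0] by blast

lemma measurable_observation:
  assumes "a \<in> observations J n"
  shows "observation a \<in> measurable (sample_space d J n F j0) (F d (observation_class j0 a))"
proof (cases a)
  case None
  have "observation None = snd" by (rule ext) simp
  then show ?thesis using None unfolding sample_space_def by simp
next
  case (Some s)
  let ?I = "SIGMA k:{1..J}. {1..n k}"
  have "s \<in> ?I" using Some assms by (auto simp: observations_def)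
  then have "(\<lambda>x. x s) \<in> measurable (PiM ?I (\<lambda>(k, l). F d k)) ((\<lambda>(k, l). F d k) s)"
    by (rule measurable_component_singleton)
  then have "(\<lambda>\<omega>. fst \<omega> s) \<in> measurable (PiM ?I (\<lambda>(k, l). F d k) \<Otimes>\<^sub>M F d j0) ((\<lambda>(k, l). F d k) s)"
    by (rule measurable_compose[OF measurable_fst])
  moreover have "observation a = (\<lambda>\<omega>. fst \<omega> s)" using Some by (intro ext) simp
  moreover have "(\<lambda>(k, l). F d k) s = F d (observation_class j0 a)"
    using Some by (simp add: observation_class_def case_prod_beta)
  ultimately show ?thesis unfolding sample_space_def by simp
qed

lemma vimage_observations_PiE:
  assumes A: "\<And>a. a \<in> observations J n \<Longrightarrow> A a \<subseteq> space (F d (observation_class j0 a))"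
  shows "(\<lambda>\<omega>. \<lambda>a\<in>observations J n. observation a \<omega>) -` Pi\<^sub>E (observations J n) A
      \<inter> space (sample_space d J n F j0)
    = (\<Pi>\<^sub>E s\<in>SIGMA k:{1..J}. {1..n k}. A (Some s)) \<times> A None"
    (is "?L = ?R")
proof -
  let ?I = "SIGMA k:{1..J}. {1..n k}"
  have space_S: "space (sample_space d J n F j0) = (\<Pi>\<^sub>E s\<in>?I. space (F d (fst s))) \<times> space (F d j0)"
    by (simp add: sample_space_def space_pair_measure space_PiM case_prod_beta)
  have "A (Some s) \<subseteq> space (F d (fst s))" if "s \<in> ?I" for s
    using A[of "Some s"] that by (auto simp: observations_def)
  then have R_space: "?R \<subseteq> space (sample_space d J n F j0)"
    unfolding space_S using A[of None] by (intro Sigma_mono PiE_mono) auto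
  show ?thesis
  proof (intro equalityI subsetI)
    fix \<omega> assume "\<omega> \<in> ?L"
    then have "\<forall>a\<in>observations J n. observation a \<omega> \<in> A a" and "\<omega> \<in> space (sample_space d J n F j0)"
      by (auto simp: Pi_iff)
    then show "\<omega> \<in> ?R"
      unfolding space_S by (auto simp: PiE_iff observations_def)
  next
    fix \<omega> assume \<omega>: "\<omega> \<in> ?R"
    then have "\<forall>a\<in>observations J n. observation a \<omega> \<in> A a"
      by (auto simp: observations_def)
    with \<omega> R_space show "\<omega> \<in> ?L"
      by (auto simp: restrict_PiE_iff)
  qed
qed

lemma distr_sample_space_observations:
  "distr (sample_space d J n F j0) (PiM (observations J n) (\<lambda>a. F d (observation_class j0 a)))
      (\<lambda>\<omega>. \<lambda>a\<in>observations J n. observation a \<omega>)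
    = PiM (observations J n) (\<lambda>a. F d (observation_class j0 a))"
proof (rule PiM_eqI_prob_space[OF finite_observations prob_space_observation_class])
  let ?I = "SIGMA k:{1..J}. {1..n k}"
  interpret F0: prob_space "F d j0" using F_prob j0 .
  fix A assume A: "\<And>a. a \<in> observations J n \<Longrightarrow> A a \<in> sets (F d (observation_class j0 a))"
  have A_Some: "A (Some s) \<in> sets (F d (fst s))" if "s \<in> ?I" for s
    using A[of "Some s"] that by auto
  have "emeasure (PiM ?I (\<lambda>(k, l). F d k)) (prod_emb ?I (\<lambda>(k, l). F d k) ?I (\<Pi>\<^sub>E s\<in>?I. A (Some s)))
      = (\<Prod>s\<in>?I. emeasure (F d (fst s)) (A (Some s)))"
    using A_Some F_prob by (subst emeasure_PiM_emb) (auto simp: case_prod_beta)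
  moreover have "prod_emb ?I (\<lambda>(k, l). F d k) ?I (\<Pi>\<^sub>E s\<in>?I. A (Some s)) = (\<Pi>\<^sub>E s\<in>?I. A (Some s))"
    using A_Some[THEN sets.sets_into_space] by (intro prod_emb_PiE_same_index) (auto simp: case_prod_beta)
  moreover have "(\<Pi>\<^sub>E s\<in>?I. A (Some s)) \<in> sets (PiM ?I (\<lambda>(k, l). F d k))"
    using A_Some by (intro sets_PiM_I_finite) (auto simp: case_prod_beta)
  ultimately have "emeasure (sample_space d J n F j0) ((\<Pi>\<^sub>E s\<in>?I. A (Some s)) \<times> A None)
      = (\<Prod>s\<in>?I. emeasure (F d (fst s)) (A (Some s))) * emeasure (F d j0) (A None)"
    unfolding sample_space_def using A[of None] by (simp add: F0.emeasure_pair_measure_Times)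
  moreover have "(\<Prod>a\<in>observations J n. emeasure (F d (observation_class j0 a)) (A a))
      = emeasure (F d j0) (A None) * (\<Prod>s\<in>?I. emeasure (F d (fst s)) (A (Some s)))"
    by (simp add: observations_def prod.reindex observation_class_def)
  moreover note vimage_observations_PiE[OF A[THEN sets.sets_into_space]]
  ultimately show "emeasure (distr (sample_space d J n F j0)
        (PiM (observations J n) (\<lambda>a. F d (observation_class j0 a)))
        (\<lambda>\<omega>. \<lambda>a\<in>observations J n. observation a \<omega>)) (Pi\<^sub>E (observations J n) A)
      = (\<Prod>a\<in>observations J n. emeasure (F d (observation_class j0 a)) (A a))"
    using A measurable_observation
    by (subst emeasure_distr) (auto simp: mult.commute intro!: measurable_restrict sets_PiM_I_finite
        finite_observations)
qed (simp_all only: sets_distr)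

lemma distr_observation_pair:
  assumes a: "a \<in> observations J n" and b: "b \<in> observations J n" and "a \<noteq> b"
  shows "distr (sample_space d J n F j0)
      (F d (observation_class j0 a) \<Otimes>\<^sub>M F d (observation_class j0 b))
      (\<lambda>\<omega>. (observation a \<omega>, observation b \<omega>))
    = F d (observation_class j0 a) \<Otimes>\<^sub>M F d (observation_class j0 b)"
proof -
  let ?O = "observations J n" and ?M = "\<lambda>a. F d (observation_class j0 a)"
  have "distr (sample_space d J n F j0) (?M a \<Otimes>\<^sub>M ?M b) (\<lambda>\<omega>. (observation a \<omega>, observation b \<omega>))
      = distr (distr (sample_space d J n F j0) (PiM ?O ?M) (\<lambda>\<omega>. \<lambda>a\<in>?O. observation a \<omega>))
          (?M a \<Otimes>\<^sub>M ?M b) (\<lambda>x. (x a, x b))"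
    using a b measurable_observation
    by (subst distr_distr) (auto intro!: measurable_restrict distr_cong)
  also have "\<dots> = ?M a \<Otimes>\<^sub>M ?M b"
    unfolding distr_sample_space_observations
    using assms prob_space_observation_class by (intro distr_PiM_pair_components) auto
  finally show ?thesis .
qed

lemma measurable_observation_pair:
  assumes "a \<in> observations J n" "b \<in> observations J n"
  shows "(\<lambda>\<omega>. (observation a \<omega>, observation b \<omega>)) \<in> measurable (sample_space d J n F j0)
    (F d (observation_class j0 a) \<Otimes>\<^sub>M F d (observation_class j0 b))"
  using measurable_observation[OF assms(1)] measurable_observation[OF assms(2)] by measurable

lemma observation_pair_event_sets:
  assumes "a \<in> observations J n" "b \<in> observations J n"
    and G: "G \<in> sets (F d (observation_class j0 a) \<Otimes>\<^sub>M F d (observation_class j0 b))"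
  shows "{\<omega> \<in> space (sample_space d J n F j0). (observation a \<omega>, observation b \<omega>) \<in> G}
    \<in> sets (sample_space d J n F j0)"
  using measurable_sets[OF measurable_observation_pair[OF assms(1,2)] G]
  by (simp add: vimage_def Int_def conj_commute)

lemma measure_observation_pair_event:
  assumes "a \<in> observations J n" "b \<in> observations J n" "a \<noteq> b"
    and G: "G \<in> sets (F d (observation_class j0 a) \<Otimes>\<^sub>M F d (observation_class j0 b))"
  shows "measure (sample_space d J n F j0)
      {\<omega> \<in> space (sample_space d J n F j0). (observation a \<omega>, observation b \<omega>) \<in> G}
    = measure (F d (observation_class j0 a) \<Otimes>\<^sub>M F d (observation_class j0 b)) G"
  using measure_distr[OF measurable_observation_pair[OF assms(1,2)] G]
  unfolding distr_observation_pair[OF assms(1-3)] by (simp add: vimage_def Int_def conj_commute)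

lemma misclass_event_subset_l1_deviations:
  assumes n: "\<forall>j\<in>{1..J}. n j \<ge> 2" and "0 < d"
    and gap: "\<And>i. i \<in> {1..J} \<Longrightarrow> i \<noteq> j0 \<Longrightarrow> 4 * (real J + 1) * \<epsilon> < 2 * \<tau> j0 i - \<tau> j0 j0 - \<tau> i i"
  shows "misclass_event d J n F j0 \<subseteq> (\<Union>a\<in>observations J n. \<Union>b\<in>observations J n - {a}.
    {\<omega> \<in> space (sample_space d J n F j0). (observation a \<omega>, observation b \<omega>) \<in>
      l1_deviation_event d (\<tau> (observation_class j0 a) (observation_class j0 b)) \<epsilon>
        (F d (observation_class j0 a)) (F d (observation_class j0 b))})"
    (is "_ \<subseteq> ?U")
proof
  fix \<omega> assume \<omega>: "\<omega> \<in> misclass_event d J n F j0"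
  then have \<omega>_space: "\<omega> \<in> space (sample_space d J n F j0)"
    unfolding misclass_event_def by simp
  show "\<omega> \<in> ?U"
  proof (rule ccontr)
    assume "\<omega> \<notin> ?U"
    have close: "\<bar>l1dist d (observation a (fst \<omega>, snd \<omega>)) (observation b (fst \<omega>, snd \<omega>))
        - real d * \<tau> (observation_class j0 a) (observation_class j0 b)\<bar> \<le> real d * \<epsilon>"
      if "a \<in> observations J n" "b \<in> observations J n" "a \<noteq> b" for a b
    proof -
      have "(observation a \<omega>, observation b \<omega>) \<notin> l1_deviation_event d
          (\<tau> (observation_class j0 a) (observation_class j0 b)) \<epsilon>
          (F d (observation_class j0 a)) (F d (observation_class j0 b))"
        using \<open>\<omega> \<notin> ?U\<close> \<omega>_space that by blast
      then show ?thesis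
        using measurable_space[OF measurable_observation_pair[OF that(1,2)] \<omega>_space]
        unfolding l1_deviation_event_def by (simp add: not_less)
    qed
    have "0 < real d" using \<open>0 < d\<close> by simp
    with n j0 have "\<not> mdist1_misclassified d J n (fst \<omega>) (snd \<omega>) j0"
      using close gap by (rule not_misclassified_if_l1dists_close)
    then show False using \<omega> unfolding misclass_event_def by simp
  qed
qed

lemma borel_measurable_l1dist_observations:
  assumes F_sets: "\<And>k. k \<in> {1..J} \<Longrightarrow> sets (F d k) = sets (PiM {..<d} (\<lambda>_. borel))"
    and a: "a \<in> observations J n" and b: "b \<in> observations J n"
  shows "(\<lambda>\<omega>. l1dist d (observation a \<omega>) (observation b \<omega>)) \<in> borel_measurable (sample_space d J n F j0)"
proof -
  have "(\<lambda>\<omega>. observation a \<omega> q) \<in> borel_measurable (sample_space d J n F j0)"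
    if "a \<in> observations J n" "q < d" for a q
    using measurable_compose[OF measurable_observation[OF that(1)] measurable_coordinate]
      F_sets observation_class_in[OF j0 that(1)] that(2) by blast
  then show ?thesis
    unfolding l1dist_def using a b
    by (intro borel_measurable_sum borel_measurable_abs borel_measurable_diff) auto
qed

lemma misclass_event_sets:
  assumes F_sets: "\<And>k. k \<in> {1..J} \<Longrightarrow> sets (F d k) = sets (PiM {..<d} (\<lambda>_. borel))"
  shows "misclass_event d J n F j0 \<in> sets (sample_space d J n F j0)"
proof -
  let ?S = "sample_space d J n F j0"
  note l1 = borel_measurable_l1dist_observations[OF F_sets]
  have test: "(\<lambda>\<omega>. test_features d n (fst \<omega>) (snd \<omega>) k) \<in> borel_measurable ?S"
    if "k \<in> {1..J}" for k
    unfolding test_features_def using l1[of None "Some (k, _)"] that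
    by (intro borel_measurable_Min) auto
  have train: "(\<lambda>\<omega>. train_features d n (fst \<omega>) (i, l) k) \<in> borel_measurable ?S"
    if "i \<in> {1..J}" "l \<in> {1..n i}" "k \<in> {1..J}" for i l k
    unfolding train_features_def using l1[of "Some (i, l)" "Some (k, _)"] that
    by (intro borel_measurable_Min) auto
  have feat: "(\<lambda>\<omega>. feat_dist J (test_features d n (fst \<omega>) (snd \<omega>)) (train_features d n (fst \<omega>) (i, l)))
      \<in> borel_measurable ?S" if "i \<in> {1..J}" "l \<in> {1..n i}" for i l
  proof -
    have "(\<lambda>\<omega>. \<Sum>k\<in>{1..J}. (test_features d n (fst \<omega>) (snd \<omega>) k - train_features d n (fst \<omega>) (i, l) k)^2)
        \<in> borel_measurable ?S"
      using test train that by (intro borel_measurable_sum borel_measurable_power borel_measurable_diff) auto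
    then show ?thesis
      unfolding feat_dist_def by (rule measurable_compose[OF _ borel_measurable_sqrt])
  qed
  have "Measurable.pred ?S (\<lambda>\<omega>. mdist1_misclassified d J n (fst \<omega>) (snd \<omega>) j0)"
    unfolding mdist1_misclassified_def using feat j0 by measurable
  then show ?thesis
    unfolding misclass_event_def by (rule predE)
qed

end

section \<open>Consistency\<close>

lemma misclass_prob_tendsto_0:
  fixes F :: "nat \<Rightarrow> nat \<Rightarrow> (nat \<Rightarrow> real) measure" and \<tau> :: "nat \<Rightarrow> nat \<Rightarrow> real"
  assumes n: "\<forall>j\<in>{1..J}. n j \<ge> 2" and j0: "j0 \<in> {1..J}"
    and F_prob: "\<And>d k. k \<in> {1..J} \<Longrightarrow> prob_space (F d k)"
    and F_sets: "\<And>d k. k \<in> {1..J} \<Longrightarrow> sets (F d k) = sets (PiM {..<d} (\<lambda>_. borel))"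
    and gap: "\<And>i. i \<in> {1..J} \<Longrightarrow> i \<noteq> j0 \<Longrightarrow> 4 * (real J + 1) * \<epsilon> < 2 * \<tau> j0 i - \<tau> j0 j0 - \<tau> i i"
    and deviation: "\<And>k i. k \<in> {1..J} \<Longrightarrow> i \<in> {1..J} \<Longrightarrow>
      (\<lambda>d. measure (F d k \<Otimes>\<^sub>M F d i) (l1_deviation_event d (\<tau> k i) \<epsilon> (F d k) (F d i))) \<longlonglongrightarrow> 0"
  shows "(\<lambda>d. measure (sample_space d J n F j0) (misclass_event d J n F j0)) \<longlonglongrightarrow> 0"
proof -
  let ?S = "\<lambda>d. sample_space d J n F j0" and ?O = "observations J n" and ?c = "observation_class j0"
  define B where "B d a b = {\<omega> \<in> space (?S d). (observation a \<omega>, observation b \<omega>) \<in>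
    l1_deviation_event d (\<tau> (?c a) (?c b)) \<epsilon> (F d (?c a)) (F d (?c b))}" for d a b
  have deviation_sets: "l1_deviation_event d (\<tau> (?c a) (?c b)) \<epsilon> (F d (?c a)) (F d (?c b))
      \<in> sets (F d (?c a) \<Otimes>\<^sub>M F d (?c b))" if "a \<in> ?O" "b \<in> ?O" for d a b
    using F_sets observation_class_in[OF j0] that by (intro l1_deviation_event_sets) auto
  have B_sets: "B d a b \<in> sets (?S d)" if "a \<in> ?O" "b \<in> ?O" for d a b
    unfolding B_def using observation_pair_event_sets[where F = F and d = d, OF j0 F_prob that deviation_sets[OF that]] .
  have B_lim: "(\<lambda>d. measure (?S d) (B d a b)) \<longlonglongrightarrow> 0" if "a \<in> ?O" "b \<in> ?O - {a}" for a b
  proof -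
    have "measure (?S d) (B d a b)
        = measure (F d (?c a) \<Otimes>\<^sub>M F d (?c b)) (l1_deviation_event d (\<tau> (?c a) (?c b)) \<epsilon> (F d (?c a)) (F d (?c b)))"
      for d
      unfolding B_def using that by (intro measure_observation_pair_event[where F = F, OF j0 F_prob] deviation_sets) auto
    moreover have "?c a \<in> {1..J}" "?c b \<in> {1..J}"
      using observation_class_in[OF j0] that by auto
    ultimately show ?thesis
      using deviation by simp
  qed
  show ?thesis
  proof (rule tendsto_sandwich[OF _ _ tendsto_const])
    show "(\<lambda>d. \<Sum>a\<in>?O. \<Sum>b\<in>?O - {a}. measure (?S d) (B d a b)) \<longlonglongrightarrow> 0"
      using B_lim by (intro tendsto_null_sum) auto
    show "\<forall>\<^sub>F d in sequentially. 0 \<le> measure (?S d) (misclass_event d J n F j0)"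
      by simp
    show "\<forall>\<^sub>F d in sequentially.
        measure (?S d) (misclass_event d J n F j0) \<le> (\<Sum>a\<in>?O. \<Sum>b\<in>?O - {a}. measure (?S d) (B d a b))"
      using eventually_gt_at_top[of 0]
    proof eventually_elim
      case (elim d)
      interpret prob_space "?S d"
        unfolding sample_space_def using F_prob j0 by (intro prob_space_pair prob_space_PiM) auto
      have "measure (?S d) (misclass_event d J n F j0) \<le> measure (?S d) (\<Union>a\<in>?O. \<Union>b\<in>?O - {a}. B d a b)"
        using misclass_event_subset_l1_deviations[where F = F and d = d and \<tau> = \<tau> and \<epsilon> = \<epsilon>, OF j0 F_prob n elim gap] B_sets
        unfolding B_def by (intro finite_measure_mono) (auto simp: finite_observations)
      also have "\<dots> \<le> (\<Sum>a\<in>?O. measure (?S d) (\<Union>b\<in>?O - {a}. B d a b))"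
        using B_sets by (intro finite_measure_subadditive_finite) (auto simp: finite_observations)
      also have "\<dots> \<le> (\<Sum>a\<in>?O. \<Sum>b\<in>?O - {a}. measure (?S d) (B d a b))"
        using B_sets by (intro sum_mono finite_measure_subadditive_finite) (auto simp: finite_observations)
      finally show ?case .
    qed
  qed
qed

lemma energy_avg_eq_mad_avg:
  "energy_avg d P Q = 2 * mad_avg d P Q - mad_avg d P P - mad_avg d Q Q"
  unfolding energy_avg_def mad_avg_def
  by (simp add: sum_subtractf sum_distrib_left diff_divide_distrib)

lemma tendsto_energy_avg:
  assumes "(\<lambda>d. mad_avg d (P d) (Q d)) \<longlonglongrightarrow> \<tau>\<^sub>P\<^sub>Q"
    and "(\<lambda>d. mad_avg d (P d) (P d)) \<longlonglongrightarrow> \<tau>\<^sub>P\<^sub>P" and "(\<lambda>d. mad_avg d (Q d) (Q d)) \<longlonglongrightarrow> \<tau>\<^sub>Q\<^sub>Q"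
  shows "(\<lambda>d. energy_avg d (P d) (Q d)) \<longlonglongrightarrow> 2 * \<tau>\<^sub>P\<^sub>Q - \<tau>\<^sub>P\<^sub>P - \<tau>\<^sub>Q\<^sub>Q"
  unfolding energy_avg_eq_mad_avg using assms by (intro tendsto_intros)

lemma finite_ex_pos_mult_less:
  fixes f :: "'a \<Rightarrow> real"
  assumes "finite A" "\<And>a. a \<in> A \<Longrightarrow> 0 < f a" and "0 < c"
  shows "\<exists>e>0. \<forall>a\<in>A. c * e < f a"
proof -
  let ?m = "Min (insert 1 (f ` A))"
  have "0 < ?m" "\<forall>a\<in>A. ?m \<le> f a" using assms by auto
  then show ?thesis
    using \<open>0 < c\<close> by (intro exI[of _ "?m / (2 * c)"]) (auto simp: field_simps)
qed

theorem theorem3: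
  fixes J :: nat and n :: "nat \<Rightarrow> nat"
    and F :: "nat \<Rightarrow> nat \<Rightarrow> (nat \<Rightarrow> real) measure"
  assumes J: "J \<ge> 2"
    and n: "\<forall>j\<in>{1..J}. n j \<ge> 2"
    and F_prob: "\<forall>d. \<forall>j\<in>{1..J}. prob_space (F d j)"
    and F_sets: "\<forall>d. \<forall>j\<in>{1..J}. sets (F d j) = sets (PiM {..<d} (\<lambda>_. borel))"
    and A1: "\<forall>j\<in>{1..J}. \<exists>C. \<forall>d. \<forall>q<d.
               integrable (F d j) (\<lambda>x. (x q)^2) \<and> (\<integral>x. (x q)^2 \<partial>(F d j)) \<le> C"
    and A2: "\<forall>j\<in>{1..J}. \<forall>i\<in>{1..J}.
               (\<lambda>d. (\<Sum>r<d. \<Sum>s\<in>{..<d} - {r}.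
                   \<bar>correlation (F d j \<Otimes>\<^sub>M F d i)
                      (\<lambda>xy. \<bar>fst xy r - snd xy r\<bar>) (\<lambda>xy. \<bar>fst xy s - snd xy s\<bar>)\<bar>)
                  / (real d)^2) \<longlonglongrightarrow> 0"
    and A3: "\<forall>j\<in>{1..J}. \<forall>i\<in>{1..J}. \<exists>\<tau>.
               (\<lambda>d. (\<Sum>q<d. mad (F d j) (F d i) q) / real d) \<longlonglongrightarrow> \<tau>"
    and E_pos: "\<forall>j\<in>{1..J}. \<forall>i\<in>{1..J}. j \<noteq> i \<longrightarrow>
               (\<exists>E>0. (\<lambda>d. energy_avg d (F d j) (F d i)) \<longlonglongrightarrow> E)"
  shows "\<forall>j\<in>{1..J}.
           (\<forall>d. misclass_event d J n F j \<in> sets (sample_space d J n F j)) \<and>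
           (\<lambda>d. measure (sample_space d J n F j) (misclass_event d J n F j)) \<longlonglongrightarrow> 0"
proof (intro ballI conjI allI)
  fix j d assume "j \<in> {1..J}"
  then show "misclass_event d J n F j \<in> sets (sample_space d J n F j)"
    using F_prob F_sets by (intro misclass_event_sets) auto
next
  fix j0 assume j0: "j0 \<in> {1..J}"
  obtain \<tau> where \<tau>: "\<And>k i. k \<in> {1..J} \<Longrightarrow> i \<in> {1..J} \<Longrightarrow> (\<lambda>d. mad_avg d (F d k) (F d i)) \<longlonglongrightarrow> \<tau> k i"
    using A3 unfolding mad_avg_def by metis
  have "0 < 2 * \<tau> j0 i - \<tau> j0 j0 - \<tau> i i" if i: "i \<in> {1..J}" "i \<noteq> j0" for i
  proof -
    obtain E where E: "0 < E" "(\<lambda>d. energy_avg d (F d j0) (F d i)) \<longlonglongrightarrow> E"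
      using mp[OF bspec[OF bspec[OF E_pos j0] i(1)] i(2)[symmetric]] by blast
    have "(\<lambda>d. energy_avg d (F d j0) (F d i)) \<longlonglongrightarrow> 2 * \<tau> j0 i - \<tau> j0 j0 - \<tau> i i"
      using j0 i by (intro tendsto_energy_avg \<tau>)
    from LIMSEQ_unique[OF E(2) this] E(1) show ?thesis by simp
  qed
  then have "\<exists>e>0. \<forall>i\<in>{1..J} - {j0}. 4 * (real J + 1) * e < 2 * \<tau> j0 i - \<tau> j0 j0 - \<tau> i i"
    by (intro finite_ex_pos_mult_less) auto
  then obtain e where "0 < e"
    and gap: "\<And>i. i \<in> {1..J} \<Longrightarrow> i \<noteq> j0 \<Longrightarrow> 4 * (real J + 1) * e < 2 * \<tau> j0 i - \<tau> j0 j0 - \<tau> i i"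
    by blast
  have deviation: "(\<lambda>d. measure (F d k \<Otimes>\<^sub>M F d i) (l1_deviation_event d (\<tau> k i) e (F d k) (F d i))) \<longlonglongrightarrow> 0"
    if "k \<in> {1..J}" "i \<in> {1..J}" for k i
    by (rule l1_deviation_event_tendsto_0[OF F_prob[rule_format, OF that(1)] F_prob[rule_format, OF that(2)]
          F_sets[rule_format, OF that(1)] F_sets[rule_format, OF that(2)]
          bspec[OF A1 that(1)] bspec[OF A1 that(2)] _ \<tau>[OF that] \<open>0 < e\<close>])
      (use A2 that in \<open>simp add: abs_corr_sum_def\<close>)
  have "\<And>d k. k \<in> {1..J} \<Longrightarrow> prob_space (F d k)"
    "\<And>d k. k \<in> {1..J} \<Longrightarrow> sets (F d k) = sets (PiM {..<d} (\<lambda>_. borel))"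
    using F_prob F_sets by blast+
  with n j0 show "(\<lambda>d. measure (sample_space d J n F j0) (misclass_event d J n F j0)) \<longlonglongrightarrow> 0"
    using gap deviation by (rule misclass_prob_tendsto_0)
qed

end
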